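(* Let $A$ be a differential $K$-algebra without exponents nor logarithm and let $M$ be a regular singular differential module over $A$ of rank $n$. If $G$ and $G'$ are matrices of the connection of $M$ in two $A$-bases of $M$, both with all entries in $K$, then the multisets of eigenvalues (with multiplicity) of $G$ and $G'$ have the same image in $K/\mathbb{Z}$. Consequently this image multiset (the multiset of exponents $\mathrm{Exp}(M)\subset K/\mathbb{Z}$) is an isomorphism invariant of $M$.
   Context: $K$ is an algebraically closed field of characteristic $0$. $K[t^K]$ is the group algebra over $K$ of $(K,+)$, with $K$-basis $t^a$ ($a\in K$), $t^at^b=t^{a+b}$; $K[t,t^{-1}]$ is identified with the span of $t^n$, $n\in\mathbb{Z}$. Fix a set $\widetilde{K/\mathbb{Z}}\subset K$ of representatives of $K/\mathbb{Z}$ with $0\in\widetilde{K/\mathbb{Z}}$. $A$ is a commutative ring with unit containing $K[t,t^{-1}]$ as a subring, with a derivation $\partial$ extending $t\frac{d}{dt}$. $A[t^K]:=A\otimes_{K[t,t^{-1}]}K[t^K]$, $E_A:=A[t^K][\ell]$ ($\ell$ an indeterminate), with derivation $\partial$ extending that of $A$, $\partial(t^a)=at^a$, $\partial(\ell)=1$. $A$ is a differential $K$-algebra without exponents nor logarithm if $\{f\in A:\partial^2 f=0\}=K$ and, for every $a\in\widetilde{K/\mathbb{Z}}\setminus\{0\}$, $\partial f+af=0$ ($f\in A$) implies $f=0$. A differential module over a differential ring $(B,\partial)$ is a $B$-module $M$ with additive $\nabla$ satisfying $\nabla(fm)=\partial(f)m+f\nabla(m)$; it is trivial if isomorphic to a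 direct sum of copies of $(B,\partial)$. If $M$ is free with basis $b_1,\dots,b_n$ and $\nabla(b_i)=\sum_j g_{j,i}b_j$, the matrix of the connection in this basis is $G=(g_{i,j})$. $M$ is regular singular if $M$ is finite free over $A$ and $M\otimes_AE_A$ (connection $\nabla\otimes1+1\otimes\partial$) is trivial as a differential module over $E_A$. *)

theory Defs
  imports "Jordan_Normal_Form.Char_Poly" "HOL-Computational_Algebra.Polynomial"
begin

text \<open>K is a type 'k of class field_char_0 (algebraic closedness is an
explicit hypothesis of the theorem). A is a type 'a of class comm_ring_1, with a ring
embedding emb of K, an element t with inverse ti, so that K[t,t^-1] (spanned by
emb c * t^z, z integer) is a subring of A.\<close>

definition tpow :: "'a::comm_ring_1 \<Rightarrow> 'a \<Rightarrow> int \<Rightarrow> 'a" where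
  "tpow t ti z = (if z \<ge> 0 then t ^ nat z else ti ^ nat (- z))"

definition reps :: "'k::field_char_0 set \<Rightarrow> bool" where
  "reps R \<longleftrightarrow> 0 \<in> R \<and> (\<forall>x. \<exists>!r. r \<in> R \<and> x - r \<in> \<int>)"

text \<open>A commutative ring containing K[t,t^-1] as a subring, with a derivation d
extending t d/dt.\<close>
definition diff_K_algebra ::
  "('k::field_char_0 \<Rightarrow> 'a::comm_ring_1) \<Rightarrow> 'a \<Rightarrow> 'a \<Rightarrow> ('a \<Rightarrow> 'a) \<Rightarrow> bool" where
  "diff_K_algebra emb t ti d \<longleftrightarrow>
     (\<forall>x y. emb (x + y) = emb x + emb y) \<and> (\<forall>x y. emb (x * y) = emb x * emb y) \<and>
     emb 1 = 1 \<and> t * ti = 1 \<and>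
     (\<forall>F (c :: int \<Rightarrow> 'k). finite F \<longrightarrow> (\<Sum>z\<in>F. emb (c z) * tpow t ti z) = 0 \<longrightarrow>
        (\<forall>z\<in>F. c z = 0)) \<and>
     (\<forall>x y. d (x + y) = d x + d y) \<and> (\<forall>x y. d (x * y) = d x * y + x * d y) \<and>
     (\<forall>c z. d (emb c * tpow t ti z) = of_int z * (emb c * tpow t ti z))"

definition no_exp_log ::
  "('k::field_char_0 \<Rightarrow> 'a::comm_ring_1) \<Rightarrow> ('a \<Rightarrow> 'a) \<Rightarrow> 'k set \<Rightarrow> bool" where
  "no_exp_log emb d R \<longleftrightarrow>
     {f. d (d f) = 0} = range emb \<and>
     (\<forall>a \<in> R - {0}. \<forall>f. d f + emb a * f = 0 \<longrightarrow> f = 0)"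

text \<open>E_A = A[t^K][l]. Since K[t^K] is free over K[t,t^-1] with basis t^a (a in R),
an element of E_A is a finitely supported family of coefficients e a k in A
(a in R, k in nat), standing for the sum of e a k * t^a * l^k.\<close>
definition EA :: "'k::field_char_0 set \<Rightarrow> ('k \<Rightarrow> nat \<Rightarrow> 'a::comm_ring_1) set" where
  "EA R = {e. finite {(a, k). e a k \<noteq> 0} \<and> (\<forall>a k. e a k \<noteq> 0 \<longrightarrow> a \<in> R)}"

definition int_of :: "'k::field_char_0 \<Rightarrow> int" where
  "int_of x = (THE z. x = of_int z)"

text \<open>Product in E_A: t^a t^b = t^(a+b-c) t^c with c in R, a+b-c an integer.\<close>
definition emul :: "'k::field_char_0 set \<Rightarrow> 'a::comm_ring_1 \<Rightarrow> 'a \<Rightarrow>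
    ('k \<Rightarrow> nat \<Rightarrow> 'a) \<Rightarrow> ('k \<Rightarrow> nat \<Rightarrow> 'a) \<Rightarrow> ('k \<Rightarrow> nat \<Rightarrow> 'a)" where
  "emul R t ti e1 e2 = (\<lambda>c m. if c \<in> R then
      (\<Sum>p \<in> {((a, i), (b, j)). e1 a i \<noteq> 0 \<and> e2 b j \<noteq> 0 \<and> i + j = m \<and> a + b - c \<in> \<int>}.
         (case p of ((a, i), (b, j)) \<Rightarrow> e1 a i * e2 b j * tpow t ti (int_of (a + b - c))))
      else 0)"

text \<open>Derivation on E_A: d(f t^a l^k) = (d f + a f) t^a l^k + k f t^a l^(k-1).\<close>
definition ederiv :: "('k \<Rightarrow> 'a::comm_ring_1) \<Rightarrow> ('a \<Rightarrow> 'a) \<Rightarrow>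
    ('k \<Rightarrow> nat \<Rightarrow> 'a) \<Rightarrow> ('k \<Rightarrow> nat \<Rightarrow> 'a)" where
  "ederiv emb d e = (\<lambda>a k. d (e a k) + emb a * e a k + of_nat (k + 1) * e a (k + 1))"

definition emat_mult :: "'k::field_char_0 set \<Rightarrow> 'a::comm_ring_1 \<Rightarrow> 'a \<Rightarrow> nat \<Rightarrow>
    (nat \<Rightarrow> nat \<Rightarrow> 'k \<Rightarrow> nat \<Rightarrow> 'a) \<Rightarrow> (nat \<Rightarrow> nat \<Rightarrow> 'k \<Rightarrow> nat \<Rightarrow> 'a) \<Rightarrow>
    (nat \<Rightarrow> nat \<Rightarrow> 'k \<Rightarrow> nat \<Rightarrow> 'a)" where
  "emat_mult R t ti n Y Z = (\<lambda>i j c m. \<Sum>l<n. emul R t ti (Y i l) (Z l j) c m)"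

definition eone_mat :: "nat \<Rightarrow> nat \<Rightarrow> 'k::zero \<Rightarrow> nat \<Rightarrow> 'a::comm_ring_1" where
  "eone_mat i j a k = (if i = j \<and> a = 0 \<and> k = 0 then 1 else 0)"

definition diff_module :: "('a::comm_ring_1 \<Rightarrow> 'a) \<Rightarrow> ('a \<Rightarrow> 'm::ab_group_add \<Rightarrow> 'm) \<Rightarrow>
    ('m \<Rightarrow> 'm) \<Rightarrow> bool" where
  "diff_module d scale nabla \<longleftrightarrow> Modules.module scale \<and>
     (\<forall>x y. nabla (x + y) = nabla x + nabla y) \<and>
     (\<forall>f x. nabla (scale f x) = scale (d f) x + scale f (nabla x))"

definition is_basis :: "('a::comm_ring_1 \<Rightarrow> 'm::ab_group_add \<Rightarrow> 'm) \<Rightarrow> nat \<Rightarrow> (nat \<Rightarrow> 'm) \<Rightarrow> bool" where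
  "is_basis scale n b \<longleftrightarrow>
     (\<forall>x. \<exists>!f. (\<forall>i. n \<le> i \<longrightarrow> f i = 0) \<and> x = (\<Sum>i<n. scale (f i) (b i)))"

definition is_conn_matrix :: "('m \<Rightarrow> 'm) \<Rightarrow> ('a::comm_ring_1 \<Rightarrow> 'm::ab_group_add \<Rightarrow> 'm) \<Rightarrow>
    nat \<Rightarrow> (nat \<Rightarrow> 'm) \<Rightarrow> (nat \<Rightarrow> nat \<Rightarrow> 'a) \<Rightarrow> bool" where
  "is_conn_matrix nabla scale n b g \<longleftrightarrow>
     (\<forall>i<n. nabla (b i) = (\<Sum>j<n. scale (g j i) (b j)))"

text \<open>M tensor E_A, which is free over E_A with basis b_i (x) 1 and connection matrix g,
is trivial: it has an E_A-basis of horizontal elements, i.e. an invertible n x n matrix Y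
over E_A with d Y + g Y = 0.\<close>
definition EA_trivial :: "('k::field_char_0 \<Rightarrow> 'a::comm_ring_1) \<Rightarrow> 'a \<Rightarrow> 'a \<Rightarrow> ('a \<Rightarrow> 'a) \<Rightarrow>
    'k set \<Rightarrow> nat \<Rightarrow> (nat \<Rightarrow> nat \<Rightarrow> 'a) \<Rightarrow> bool" where
  "EA_trivial emb t ti d R n g \<longleftrightarrow>
     (\<exists>Y Z. (\<forall>i<n. \<forall>j<n. Y i j \<in> EA R \<and> Z i j \<in> EA R) \<and>
        (\<forall>i<n. \<forall>j<n. emat_mult R t ti n Y Z i j = eone_mat i j \<and>
                      emat_mult R t ti n Z Y i j = eone_mat i j) \<and>
        (\<forall>i<n. \<forall>j<n. \<forall>c m. ederiv emb d (Y i j) c m + (\<Sum>l<n. g i l * Y l j c m) = 0))"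

definition regular_singular :: "('k::field_char_0 \<Rightarrow> 'a::comm_ring_1) \<Rightarrow> 'a \<Rightarrow> 'a \<Rightarrow> ('a \<Rightarrow> 'a) \<Rightarrow>
    'k set \<Rightarrow> ('a \<Rightarrow> 'm::ab_group_add \<Rightarrow> 'm) \<Rightarrow> ('m \<Rightarrow> 'm) \<Rightarrow> nat \<Rightarrow> bool" where
  "regular_singular emb t ti d R scale nabla n \<longleftrightarrow>
     (\<exists>b g. is_basis scale n b \<and> is_conn_matrix nabla scale n b g \<and> EA_trivial emb t ti d R n g)"

definition exps_mod_Z :: "'k::field_char_0 mat \<Rightarrow> 'k set multiset" where
  "exps_mod_Z G = image_mset (\<lambda>x. {y. x - y \<in> \<int>}) (proots (char_poly G))"

end

theory Submission
  imports Defs "Jordan_Normal_Form.Schur_Decomposition" "Jordan_Normal_Form.DL_Rank"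
begin

(* The change of basis from b to b' is a matrix P over A with a left inverse and
   d P + G P = P G'. Triangularize G and G' over K, listing first the eigenvalues lying in
   a fixed class c of K/Z. In the block of P whose rows belong to eigenvalues of G outside c
   and whose columns belong to eigenvalues of G' in c, every entry f satisfies, once the
   entries closer to the lower left corner are known to vanish, d f + x f = 0 with x not an
   integer; as A has no exponents, f = 0. A left invertible matrix cannot have such a zero
   block with more columns than there are remaining rows, so c occurs for G' at most as often
   as for G, and equality follows by symmetry. *)

section \<open>Triangularization over a field\<close>

lemma invertible_mat_with_first_col:
  fixes v :: "'a::field vec"
  assumes v: "v \<in> carrier_vec n" and v0: "v \<noteq> 0\<^sub>v n"
  shows "\<exists>W W'. W \<in> carrier_mat n n \<and> W' \<in> carrier_mat n n \<and>
    W * W' = 1\<^sub>m n \<and> W' * W = 1\<^sub>m n \<and> col W 0 = v"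
proof -
  interpret vec_space "TYPE('a)" n .
  define bs where "bs = basis_completion v"
  from basis_completion[OF v v0, folded bs_def]
  have dist: "distinct bs" and indep: "\<not> lin_dep (set bs)" and bs: "set bs \<subseteq> carrier_vec n"
    and hd: "hd bs = v" and len: "length bs = n" by auto
  define W where "W = mat_of_cols n bs"
  have W: "W \<in> carrier_mat n n" unfolding W_def using len by auto
  have "det W \<noteq> 0"
  proof
    assume "det W = 0"
    then obtain x where "x \<in> carrier_vec n" "x \<noteq> 0\<^sub>v n" "W *\<^sub>v x = 0\<^sub>v n"
      using det_0_iff_vec_prod_zero_field[OF W] by auto
    from lin_depI[OF W this] dist indep bs show False
      unfolding W_def by (simp add: cols_mat_of_cols)
  qed
  from det_non_zero_imp_unit[OF W this, of "()"]
  obtain W' where W'W: "W' * W = 1\<^sub>m n" and W': "W' \<in> carrier_mat n n"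
    unfolding Units_def ring_mat_def by auto
  have "n \<noteq> 0" using v v0 by auto
  then have "col W 0 = v"
    unfolding W_def using hd len v by (cases bs) (auto simp: col_mat_of_cols)
  with W W' W'W mat_mult_left_right_inverse[OF W' W W'W] show ?thesis by blast
qed

lemma similar_mat_wit_eigenvalue_block:
  fixes A :: "'a::field mat"
  assumes A: "A \<in> carrier_mat n n" and e: "eigenvalue A e"
  shows "\<exists>A2 A3 W W'. A2 \<in> carrier_mat 1 (n - 1) \<and> A3 \<in> carrier_mat (n - 1) (n - 1) \<and>
    similar_mat_wit A (four_block_mat (mat 1 1 (\<lambda>_. e)) A2 (0\<^sub>m (n - 1) 1) A3) W W'"
proof -
  from e obtain v where "eigenvector A v e" unfolding eigenvalue_def by auto
  then have v: "v \<in> carrier_vec n" and v0: "v \<noteq> 0\<^sub>v n" and Av: "A *\<^sub>v v = e \<cdot>\<^sub>v v"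
    using A unfolding eigenvector_def by auto
  then have n: "n \<noteq> 0" by auto
  from invertible_mat_with_first_col[OF v v0] obtain W W' where W: "W \<in> carrier_mat n n"
    and W': "W' \<in> carrier_mat n n" and WW': "W * W' = 1\<^sub>m n" and W'W: "W' * W = 1\<^sub>m n"
    and colW: "col W 0 = v" by blast
  define A' where "A' = W' * A * W"
  have A': "A' \<in> carrier_mat n n" using W W' A unfolding A'_def by auto
  have "similar_mat_wit A' A W' W"
    by (rule similar_mat_witI[of _ _ n]) (use W W' A A' WW' W'W in \<open>auto simp: A'_def\<close>)
  then have sim: "similar_mat_wit A A' W W'" by (rule similar_mat_wit_sym)
  have col0: "col A' 0 = e \<cdot>\<^sub>v unit_vec n 0"
  proof -
    have "col A' 0 = (W' * A) *\<^sub>v col W 0"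
      unfolding A'_def using W W' A n by (subst col_mult2) auto
    also have "\<dots> = W' *\<^sub>v (A *\<^sub>v v)"
      unfolding colW using W' A v by (subst assoc_mult_mat_vec) auto
    also have "\<dots> = e \<cdot>\<^sub>v (W' *\<^sub>v v)" unfolding Av using W' v by (simp add: mult_mat_vec)
    also have "W' *\<^sub>v v = col (W' * W) 0"
      unfolding colW[symmetric] using W W' n by (subst col_mult2) auto
    also have "\<dots> = unit_vec n 0" unfolding W'W using n by simp
    finally show ?thesis .
  qed
  obtain A1 A2 A0 A3 where split: "split_block A' 1 1 = (A1, A2, A0, A3)"
    by (cases "split_block A' 1 1")
  from A' n have "dim_row A' = 1 + (n - 1)" "dim_col A' = 1 + (n - 1)" by auto
  from split_block[OF split this] have A2: "A2 \<in> carrier_mat 1 (n - 1)"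
    and A3: "A3 \<in> carrier_mat (n - 1) (n - 1)" and blocks: "A' = four_block_mat A1 A2 A0 A3"
    by auto
  have entry: "A' $$ (i, 0) = (if i = 0 then e else 0)" if "i < n" for i
    using arg_cong[OF col0, of "\<lambda>w. w $ i"] that A' n by auto
  have "A1 = mat 1 1 (\<lambda>_. e)" "A0 = 0\<^sub>m (n - 1) 1"
    using split entry n A' unfolding split_block_def Let_def by auto
  with A2 A3 sim blocks show ?thesis by blast
qed

lemma similar_upper_triangular_with_diag:
  fixes A :: "'a::field mat"
  assumes "A \<in> carrier_mat n n" and "char_poly A = (\<Prod>e\<leftarrow>es. [:- e, 1:])"
  shows "\<exists>B P Q. similar_mat_wit A B P Q \<and> upper_triangular B \<and> diag_mat B = es"
  using assms
proof (induction es arbitrary: n A)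
  case Nil
  then have "n = 0" using degree_monic_char_poly[of A n] by auto
  with Nil.prems show ?case
    by (intro exI[of _ A] exI[of _ "1\<^sub>m n"]) (auto intro: similar_mat_wit_refl simp: diag_mat_def)
next
  case (Cons e es n A)
  note A = \<open>A \<in> carrier_mat n n\<close>
  have "eigenvalue A e"
    unfolding eigenvalue_root_char_poly[OF A] Cons.prems by simp
  from similar_mat_wit_eigenvalue_block[OF A this] obtain A2 A3 W W'
    where A2: "A2 \<in> carrier_mat 1 (n - 1)" and A3: "A3 \<in> carrier_mat (n - 1) (n - 1)"
      and sim1: "similar_mat_wit A (four_block_mat (mat 1 1 (\<lambda>_. e)) A2 (0\<^sub>m (n - 1) 1) A3) W W'"
    by blast
  let ?E = "mat 1 1 (\<lambda>_. e) :: 'a mat"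
  have E: "?E \<in> carrier_mat 1 1" by simp
  have "char_poly ?E = [:- e, 1:]" by (simp add: char_poly_defs det_def sign_def)
  then have "[:- e, 1:] * char_poly A3 = char_poly (four_block_mat ?E A2 (0\<^sub>m (n - 1) 1) A3)"
    by (simp only: char_poly_four_block_zeros_col[OF E A2 A3])
  also have "\<dots> = [:- e, 1:] * (\<Prod>e\<leftarrow>es. [:- e, 1:])"
    using char_poly_similar[of A] sim1 Cons.prems unfolding similar_mat_def by force
  finally have "char_poly A3 = (\<Prod>e\<leftarrow>es. [:- e, 1:])"
    by (metis mult_cancel_left pCons_eq_0_iff zero_neq_one)
  from Cons.IH[OF A3 this] obtain B P Q
    where sim3: "similar_mat_wit A3 B P Q" and ut: "upper_triangular B" and diag: "diag_mat B = es"
    by blast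
  from similar_mat_witD2[OF A3 sim3] have B: "B \<in> carrier_mat (n - 1) (n - 1)"
    and P: "P \<in> carrier_mat (n - 1) (n - 1)" and Q: "Q \<in> carrier_mat (n - 1) (n - 1)"
    and PQ: "P * Q = 1\<^sub>m (n - 1)" by auto
  let ?C = "four_block_mat ?E (A2 * P) (0\<^sub>m (n - 1) 1) B"
  have "similar_mat_wit (four_block_mat ?E A2 (0\<^sub>m (n - 1) 1) A3) ?C
      (four_block_mat (1\<^sub>m 1) (0\<^sub>m 1 (n - 1)) (0\<^sub>m (n - 1) 1) P)
      (four_block_mat (1\<^sub>m 1) (0\<^sub>m 1 (n - 1)) (0\<^sub>m (n - 1) 1) Q)"
    by (rule similar_mat_wit_four_block[OF similar_mat_wit_refl[OF E] sim3])
      (use PQ A2 A3 P Q in auto)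
  moreover have "upper_triangular ?C"
    by (rule upper_triangular_four_block[OF _ B]) (use ut in auto)
  moreover have "diag_mat ?C = e # es"
    using diag_four_block_mat[OF E B] diag by (simp add: diag_mat_def)
  ultimately show ?case using similar_mat_wit_trans[OF sim1] by blast
qed

lemma monic_eq_prod_linear_factors:
  fixes p :: "'a::field poly"
  assumes alg_closed: "\<forall>q :: 'a poly. degree q \<ge> 1 \<longrightarrow> (\<exists>x. poly q x = 0)"
    and "monic p"
  shows "\<exists>es. p = (\<Prod>e\<leftarrow>es. [:- e, 1:])"
  using \<open>monic p\<close>
proof (induction "degree p" arbitrary: p rule: less_induct)
  case (less p)
  show ?case
  proof (cases "degree p = 0")
    case True
    with monic_degree_0[OF less.prems] have "p = (\<Prod>e\<leftarrow>[]. [:- e, 1:])" by simp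
    then show ?thesis by blast
  next
    case False
    with alg_closed obtain x where "poly p x = 0" by (metis One_nat_def less_one not_le)
    then obtain q where pq: "p = [:- x, 1:] * q" by (auto simp: poly_eq_0_iff_dvd elim: dvdE)
    with less.prems have "q \<noteq> 0" by auto
    then have "degree p = Suc (degree q)" unfolding pq by (subst degree_mult_eq) auto
    moreover have "monic q" using less.prems pq lead_coeff_mult[of "[:- x, 1:]" q] by simp
    ultimately obtain es where "q = (\<Prod>e\<leftarrow>es. [:- e, 1:])" using less.hyps[of q] by auto
    with pq have "p = (\<Prod>e\<leftarrow>x # es. [:- e, 1:])" by simp
    then show ?thesis by blast
  qed
qed

lemma proots_prod_linear_factors: "proots (\<Prod>e\<leftarrow>es. [:- e, 1:]) = mset (es :: 'a::field list)"
proof (induction es)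
  case (Cons e es)
  have "(\<Prod>e\<leftarrow>es. [:- e, 1:]) \<noteq> 0" by (auto simp: prod_list_zero_iff)
  then have "proots (\<Prod>e\<leftarrow>e # es. [:- e, 1:]) = proots [:- e, 1:] + proots (\<Prod>e\<leftarrow>es. [:- e, 1:])"
    by (simp only: prod_list.Cons list.map) (rule proots_mult, simp)
  with Cons.IH show ?case by simp
qed simp

lemma similar_upper_triangular_partitioned:
  fixes G :: "'a::field mat" and C :: "'a \<Rightarrow> bool"
  assumes G: "G \<in> carrier_mat n n" and split: "char_poly G = (\<Prod>e\<leftarrow>es. [:- e, 1:])"
  shows "\<exists>U S T. similar_mat_wit G U S T \<and> upper_triangular U \<and>
    (\<forall>i<n. C (U $$ (i, i)) \<longleftrightarrow> i < length (filter C es))"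
proof -
  define L where "L = filter C es @ filter (\<lambda>x. \<not> C x) es"
  have "mset L = mset es" unfolding L_def by simp
  then have "char_poly G = (\<Prod>e\<leftarrow>L. [:- e, 1:])"
    unfolding split by (metis mset_map prod_mset_prod_list)
  from similar_upper_triangular_with_diag[OF G this] obtain U S T
    where sim: "similar_mat_wit G U S T" and ut: "upper_triangular U" and diag: "diag_mat U = L"
    by blast
  have "U \<in> carrier_mat n n" using similar_mat_witD2[OF G sim] by auto
  with diag have "U $$ (i, i) = L ! i" if "i < n" for i
    using that unfolding diag_mat_def by auto
  moreover have "length L = n" using diag \<open>U \<in> carrier_mat n n\<close> unfolding diag_mat_def by auto
  moreover have "C (L ! i) \<longleftrightarrow> i < length (filter C es)" if "i < length L" for i
    using that nth_mem[of i "filter C es"] nth_mem[of "i - length (filter C es)" "filter (\<lambda>x. \<not> C x) es"]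
    unfolding L_def by (auto simp: nth_append)
  ultimately show ?thesis using sim ut by (intro exI[of _ U] exI[of _ S] exI[of _ T]) auto
qed

section \<open>Exponents modulo the integers\<close>

lemma count_image_mset_eq_size_filter:
  "count (image_mset f M) c = size (filter_mset (\<lambda>x. f x = c) M)"
  by (simp add: count_conv_size_mset filter_mset_image_mset)

lemma exps_mod_Z_upper_triangular:
  fixes G :: "'k::field_char_0 mat"
  assumes alg_closed: "\<forall>p :: 'k poly. degree p \<ge> 1 \<longrightarrow> (\<exists>x. poly p x = 0)"
    and G: "G \<in> carrier_mat n n"
  shows "\<exists>U S T. similar_mat_wit G U S T \<and> upper_triangular U \<and>
    (\<forall>i<n. {y. U $$ (i, i) - y \<in> \<int>} = c \<longleftrightarrow> i < count (exps_mod_Z G) c)"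
proof -
  from monic_eq_prod_linear_factors[OF alg_closed] degree_monic_char_poly[OF G]
  obtain es where es: "char_poly G = (\<Prod>e\<leftarrow>es. [:- e, 1:])" by blast
  have "count (exps_mod_Z G) c = length (filter (\<lambda>x. {y. x - y \<in> \<int>} = c) es)"
    unfolding exps_mod_Z_def es proots_prod_linear_factors count_image_mset_eq_size_filter
    by (simp flip: mset_filter)
  then show ?thesis
    using similar_upper_triangular_partitioned[OF G es, of "\<lambda>x. {y. x - y \<in> \<int>} = c"] by simp
qed

lemma Ints_coset_eq:
  assumes "a - b \<in> \<int>"
  shows "{y. a - y \<in> \<int>} = {y. b - y \<in> \<int>}"
proof (intro Collect_cong iffI)
  fix y
  show "b - y \<in> \<int>" if "a - y \<in> \<int>"
    using Ints_diff[OF that assms] by simp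
  show "a - y \<in> \<int>" if "b - y \<in> \<int>"
    using Ints_add[OF that assms] by simp
qed

lemma count_exps_mod_Z_le_dim:
  assumes "G \<in> carrier_mat n n"
  shows "count (exps_mod_Z G) c \<le> n"
proof -
  have "count (exps_mod_Z G) c \<le> size (proots (char_poly G))"
    unfolding exps_mod_Z_def using count_le_size by (metis size_image_mset)
  also have "\<dots> \<le> n" using size_proots_le degree_monic_char_poly[OF assms] by metis
  finally show ?thesis .
qed

section \<open>Matrices over a commutative ring\<close>

lemma det_zero_row:
  fixes A :: "'a::comm_ring_1 mat"
  assumes A: "A \<in> carrier_mat n n" and i: "i < n" and zero: "\<And>j. j < n \<Longrightarrow> A $$ (i, j) = 0"
  shows "det A = 0"
proof -
  have "multrow i 0 A = A"
    using A zero by (intro eq_matI) (auto simp: mat_multrow_def)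
  then show ?thesis using det_multrow[OF i A, of 0] by simp
qed

lemma left_invertible_zero_block_trivial:
  fixes P Q :: "'a::comm_ring_1 mat"
  assumes P: "P \<in> carrier_mat n n" and Q: "Q \<in> carrier_mat n n" and QP: "Q * P = 1\<^sub>m n"
    and k: "k < k'" "k' \<le> n"
    and zero: "\<And>i j. k \<le> i \<Longrightarrow> i < n \<Longrightarrow> j < k' \<Longrightarrow> P $$ (i, j) = 0"
  shows "(1::'a) = 0"
proof -
  define X where "X = mat k' k' (\<lambda>(i, j). P $$ (i, j))"
  define Y where "Y = mat k' k' (\<lambda>(i, j). Q $$ (i, j))"
  have X: "X \<in> carrier_mat k' k'" and Y: "Y \<in> carrier_mat k' k'" unfolding X_def Y_def by auto
  \<comment> \<open>the first \<open>k'\<close> columns of \<open>P\<close> live in the first \<open>k\<close> rows,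
    so the leading blocks still satisfy \<open>Y X = 1\<close>\<close>
  have "Y * X = 1\<^sub>m k'"
  proof (rule eq_matI)
    fix i j assume "i < dim_row (1\<^sub>m k')" "j < dim_col (1\<^sub>m k')"
    then have ij: "i < k'" "j < k'" by auto
    have "(Y * X) $$ (i, j) = (\<Sum>l<k'. Q $$ (i, l) * P $$ (l, j))"
      using ij X Y by (simp add: X_def Y_def scalar_prod_def atLeast0LessThan)
    also have "\<dots> = (\<Sum>l<n. Q $$ (i, l) * P $$ (l, j))"
      using zero ij k by (intro sum.mono_neutral_left) auto
    also have "\<dots> = (Q * P) $$ (i, j)"
      using P Q ij k by (simp add: scalar_prod_def atLeast0LessThan)
    finally show "(Y * X) $$ (i, j) = 1\<^sub>m k' $$ (i, j)" unfolding QP using ij k by auto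
  qed (use X Y in auto)
  then have "det Y * det X = 1" using det_mult[OF Y X] by simp
  moreover have "det X = 0"
    using k zero by (intro det_zero_row[OF X, of "k' - 1"]) (auto simp: X_def)
  ultimately show ?thesis by simp
qed

lemma similar_mat_wit_intertwines:
  assumes "G \<in> carrier_mat n n" and "similar_mat_wit G U S T"
  shows "T * G = U * T" and "G * S = S * U"
proof -
  from similar_mat_witD2[OF assms] have car: "U \<in> carrier_mat n n" "S \<in> carrier_mat n n"
    "T \<in> carrier_mat n n" and ST: "S * T = 1\<^sub>m n" and TS: "T * S = 1\<^sub>m n" and G: "G = S * U * T"
    by auto
  have "T * G = (T * S) * U * T" unfolding G using car by (simp add: assoc_mult_mat[of _ n n _ n _ n])
  then show "T * G = U * T" using car by (simp add: TS)
  have "G * S = S * U * (T * S)" unfolding G using car by (simp add: assoc_mult_mat[of _ n n _ n _ n])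
  then show "G * S = S * U" using car by (simp add: TS)
qed

lemma left_inverse_conj:
  fixes L L' R R' P Q :: "'a::comm_ring_1 mat"
  assumes carrier: "L \<in> carrier_mat n n" "L' \<in> carrier_mat n n" "R \<in> carrier_mat n n"
      "R' \<in> carrier_mat n n" "P \<in> carrier_mat n n" "Q \<in> carrier_mat n n"
    and "L' * L = 1\<^sub>m n" "R' * R = 1\<^sub>m n" "Q * P = 1\<^sub>m n"
  shows "(R' * Q * L') * (L * P * R) = 1\<^sub>m n"
proof -
  have "(R' * Q * L') * (L * P * R) = R' * (Q * (L' * L) * P) * R"
    using carrier by (simp add: assoc_mult_mat[of _ n n _ n _ n])
  also have "\<dots> = 1\<^sub>m n" using assms by simp
  finally show ?thesis .
qed

section \<open>Differential algebras without exponents\<close>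

lemma tpow_neg_mult:
  assumes "t * ti = (1::'a::comm_ring_1)"
  shows "tpow t ti (- z) * tpow t ti z = 1"
proof (cases "z \<ge> 0")
  case True
  have "ti ^ nat z * t ^ nat z = (t * ti) ^ nat z" by (simp add: power_mult_distrib mult.commute)
  with True assms show ?thesis by (cases "z = 0") (auto simp: tpow_def)
next
  case False
  have "t ^ nat (- z) * ti ^ nat (- z) = (t * ti) ^ nat (- z)" by (simp add: power_mult_distrib)
  with False assms show ?thesis by (auto simp: tpow_def)
qed

context
  fixes emb :: "'k::field_char_0 \<Rightarrow> 'a::comm_ring_1" and t ti :: 'a and d :: "'a \<Rightarrow> 'a"
  assumes A: "diff_K_algebra emb t ti d"
begin

lemma diff_K_algebra_comm_ring_hom: "comm_ring_hom emb"
proof -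
  have add: "emb (x + y) = emb x + emb y" and "emb (x * y) = emb x * emb y" "emb 1 = 1" for x y
    using A unfolding diff_K_algebra_def by auto
  moreover have "emb 0 = 0" using add[of 0 0] by simp
  ultimately show ?thesis by unfold_locales auto
qed

lemma diff_K_algebra_additive: "additive d"
  by unfold_locales (use A in \<open>simp add: diff_K_algebra_def\<close>)

lemma diff_K_algebra_deriv_mult: "d (x * y) = d x * y + x * d y"
  using A unfolding diff_K_algebra_def by auto

lemma diff_K_algebra_deriv_tpow: "d (emb c * tpow t ti z) = of_int z * (emb c * tpow t ti z)"
  using A unfolding diff_K_algebra_def by auto

lemma diff_K_algebra_deriv_const_mult: "d (emb c * x) = emb c * d x"
  using diff_K_algebra_deriv_tpow[of c 0] diff_K_algebra_deriv_mult[of "emb c" x] by (simp add: tpow_def)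

lemma diff_K_algebra_nontrivial: "(1::'a) \<noteq> 0"
proof
  assume "(1::'a) = 0"
  then have zero: "x = 0" for x :: 'a by (metis mult_1_right mult_zero_right)
  have "\<forall>F (c :: int \<Rightarrow> 'k). finite F \<longrightarrow> (\<Sum>z\<in>F. emb (c z) * tpow t ti z) = 0 \<longrightarrow>
      (\<forall>z\<in>F. c z = 0)"
    using A unfolding diff_K_algebra_def by (elim conjE) assumption
  from this[rule_format, of "{0}" "\<lambda>_. 1"] zero[of "\<Sum>z\<in>{0::int}. emb 1 * tpow t ti z"]
  show False by simp
qed

lemma map_mat_deriv_const_mult:
  assumes "C \<in> carrier_mat n n" "C' \<in> carrier_mat n n" "X \<in> carrier_mat n n"
  shows "map_mat d (map_mat emb C * X * map_mat emb C') = map_mat emb C * map_mat d X * map_mat emb C'"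
proof -
  interpret additive d by (rule diff_K_algebra_additive)
  have right: "d (x * emb c) = d x * emb c" for x c
    using diff_K_algebra_deriv_const_mult[of c x] by (simp add: mult.commute)
  have dR: "map_mat d (Y * map_mat emb C') = map_mat d Y * map_mat emb C'"
    if "Y \<in> carrier_mat n n" for Y
    using assms that by (intro eq_matI) (auto simp: scalar_prod_def sum right)
  have dL: "map_mat d (map_mat emb C * X) = map_mat emb C * map_mat d X"
    using assms by (intro eq_matI) (auto simp: scalar_prod_def sum diff_K_algebra_deriv_const_mult)
  have "map_mat emb C * X \<in> carrier_mat n n" using assms by simp
  from dR[OF this] show ?thesis unfolding dL .
qed

lemma no_exp_log_noninteger_solution:
  assumes reps: "reps R" and noexp: "no_exp_log emb d R"
    and x: "x \<notin> \<int>" and f: "d f + emb x * f = 0"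
  shows "f = 0"
proof -
  interpret comm_ring_hom emb by (rule diff_K_algebra_comm_ring_hom)
  from reps obtain r where r: "r \<in> R" "x - r \<in> \<int>" unfolding reps_def by blast
  then obtain m where m: "x = r + of_int m" by (metis Ints_cases add_diff_cancel_left' diff_add_cancel)
  with x have "r \<noteq> 0" by auto
  \<comment> \<open>the twist \<open>t\<^sup>m f\<close> solves the same equation with the representative \<open>r\<close>
    in place of \<open>x\<close>\<close>
  define g where "g = tpow t ti m * f"
  have "d f = - (emb x * f)" using f by (simp add: eq_neg_iff_add_eq_0)
  then have "d g = of_int m * tpow t ti m * f + tpow t ti m * - (emb x * f)"
    unfolding g_def diff_K_algebra_deriv_mult using diff_K_algebra_deriv_tpow[of 1 m] by simp
  also have "\<dots> = - (emb r * g)"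
    unfolding m g_def hom_add hom_of_int by (simp add: algebra_simps)
  finally have "g = 0" using noexp r \<open>r \<noteq> 0\<close> unfolding no_exp_log_def by auto
  moreover have "t * ti = 1" using A unfolding diff_K_algebra_def by auto
  ultimately show "f = 0"
    using tpow_neg_mult[of t ti m] unfolding g_def by (metis mult.assoc mult_1 mult_zero_right)
qed

end

section \<open>Gauge transformations\<close>

(* If b' = b P, the connection matrices F of b and F' of b' satisfy map_mat d P + F P = P F'. *)
definition gauge_transform :: "('a::comm_ring_1 \<Rightarrow> 'a) \<Rightarrow> 'a mat \<Rightarrow> 'a mat \<Rightarrow> 'a mat \<Rightarrow> bool" where
  "gauge_transform d F P F' \<longleftrightarrow> map_mat d P + F * P = P * F'"

lemma gauge_transform_conj:
  fixes L R F F' V V' P :: "'a::comm_ring_1 mat"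
  assumes carrier: "L \<in> carrier_mat n n" "R \<in> carrier_mat n n" "F \<in> carrier_mat n n"
      "F' \<in> carrier_mat n n" "V \<in> carrier_mat n n" "V' \<in> carrier_mat n n" "P \<in> carrier_mat n n"
    and gauge: "gauge_transform d F P F'"
    and LF: "L * F = V * L" and FR: "F' * R = R * V'"
    and dLPR: "map_mat d (L * P * R) = L * map_mat d P * R"
  shows "gauge_transform d V (L * P * R) V'"
proof -
  have dP: "map_mat d P \<in> carrier_mat n n" using carrier by simp
  have "map_mat d (L * P * R) + V * (L * P * R) = L * map_mat d P * R + (V * L) * P * R"
    unfolding dLPR using carrier by (simp add: assoc_mult_mat[of _ n n _ n _ n])
  also have "\<dots> = L * (map_mat d P + F * P) * R"
    unfolding LF[symmetric] using carrier dP
    by (simp add: mult_add_distrib_mat[of L n n] add_mult_distrib_mat[of _ n n _ R n]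
        assoc_mult_mat[of _ n n _ n _ n] mult_carrier_mat[of _ n n _ n])
  also have "\<dots> = (L * P * R) * V'"
    using gauge carrier unfolding gauge_transform_def
    by (simp add: assoc_mult_mat[of _ n n _ n _ n] FR)
  finally show ?thesis unfolding gauge_transform_def .
qed

lemma gauge_transform_upper_triangular_zero_block:
  fixes U U' :: "'k::field mat" and P :: "'a::comm_ring_1 mat"
  assumes hom: "comm_ring_hom emb"
    and U: "U \<in> carrier_mat n n" "upper_triangular U"
    and U': "U' \<in> carrier_mat n n" "upper_triangular U'"
    and P: "P \<in> carrier_mat n n"
    and gauge: "gauge_transform d (map_mat emb U) P (map_mat emb U')"
    and no_int_exp: "\<And>x f. x \<notin> \<int> \<Longrightarrow> d f + emb x * f = 0 \<Longrightarrow> f = 0"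
    and apart: "\<And>i j. k \<le> i \<Longrightarrow> i < n \<Longrightarrow> j < k' \<Longrightarrow> U $$ (i, i) - U' $$ (j, j) \<notin> \<int>"
    and k': "k' \<le> n"
  shows "k \<le> i \<Longrightarrow> i < n \<Longrightarrow> j < k' \<Longrightarrow> P $$ (i, j) = 0"
proof (induction "j + (n - i)" arbitrary: i j rule: less_induct)
  case less
  interpret comm_ring_hom emb by (rule hom)
  have j: "j < n" using less.prems k' by simp
  have entry: "d (P $$ (i, j)) + (\<Sum>l<n. emb (U $$ (i, l)) * P $$ (l, j))
      = (\<Sum>l<n. P $$ (i, l) * emb (U' $$ (l, j)))"
    using arg_cong[OF gauge[unfolded gauge_transform_def], of "\<lambda>M. M $$ (i, j)"] less.prems j P U U'
    by (simp add: scalar_prod_def atLeast0LessThan)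
  \<comment> \<open>by triangularity, all other terms of both sums are entries of \<open>P\<close> closer to
    the corner \<open>(n - 1, 0)\<close>\<close>
  have "(\<Sum>l<n. emb (U $$ (i, l)) * P $$ (l, j)) = (\<Sum>l\<in>{i}. emb (U $$ (i, l)) * P $$ (l, j))"
  proof (intro sum.mono_neutral_right ballI)
    fix l assume l: "l \<in> {..<n} - {i}"
    show "emb (U $$ (i, l)) * P $$ (l, j) = 0"
    proof (cases "l < i")
      case True
      then show ?thesis using U l less.prems by (auto simp: upper_triangular_def)
    next
      case False
      then show ?thesis using less l by auto
    qed
  qed (use less.prems in auto)
  moreover have "(\<Sum>l<n. P $$ (i, l) * emb (U' $$ (l, j))) = (\<Sum>l\<in>{j}. P $$ (i, l) * emb (U' $$ (l, j)))"
  proof (intro sum.mono_neutral_right ballI)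
    fix l assume l: "l \<in> {..<n} - {j}"
    show "P $$ (i, l) * emb (U' $$ (l, j)) = 0"
    proof (cases "j < l")
      case True
      then show ?thesis using U' l by (auto simp: upper_triangular_def)
    next
      case False
      then show ?thesis using less l by auto
    qed
  qed (use j in auto)
  ultimately have "d (P $$ (i, j)) + emb (U $$ (i, i) - U' $$ (j, j)) * P $$ (i, j) = 0"
    using entry by (simp add: hom_minus algebra_simps)
  with no_int_exp apart less.prems show ?case by blast
qed

lemma gauge_transform_similar:
  fixes emb :: "'k::field_char_0 \<Rightarrow> 'a::comm_ring_1" and G G' :: "'k mat"
  assumes A: "diff_K_algebra emb t ti d"
    and G: "G \<in> carrier_mat n n" and G': "G' \<in> carrier_mat n n"
    and sim: "similar_mat_wit G U S T" and sim': "similar_mat_wit G' U' S' T'"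
    and P: "P \<in> carrier_mat n n" and gauge: "gauge_transform d (map_mat emb G) P (map_mat emb G')"
  shows "gauge_transform d (map_mat emb U) (map_mat emb T * P * map_mat emb S') (map_mat emb U')"
proof -
  interpret comm_ring_hom emb by (rule diff_K_algebra_comm_ring_hom[OF A])
  from similar_mat_witD2[OF G sim] similar_mat_witD2[OF G' sim']
  have car: "U \<in> carrier_mat n n" "T \<in> carrier_mat n n" "U' \<in> carrier_mat n n" "S' \<in> carrier_mat n n"
    by auto
  have TG: "map_mat emb T * map_mat emb G = map_mat emb U * map_mat emb T"
    using similar_mat_wit_intertwines(1)[OF G sim] car G by (simp flip: mat_hom_mult)
  have GS': "map_mat emb G' * map_mat emb S' = map_mat emb S' * map_mat emb U'"
    using similar_mat_wit_intertwines(2)[OF G' sim'] car G' by (simp flip: mat_hom_mult)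
  show ?thesis
    by (rule gauge_transform_conj[OF _ _ _ _ _ _ P gauge TG GS' map_mat_deriv_const_mult[OF A]])
      (use car G G' P in simp_all)
qed

lemma count_exps_mod_Z_le:
  fixes emb :: "'k::field_char_0 \<Rightarrow> 'a::comm_ring_1" and G G' :: "'k mat"
  assumes alg_closed: "\<forall>p :: 'k poly. degree p \<ge> 1 \<longrightarrow> (\<exists>x. poly p x = 0)"
    and reps: "reps R" and A: "diff_K_algebra emb t ti d" and noexp: "no_exp_log emb d R"
    and G: "G \<in> carrier_mat n n" and G': "G' \<in> carrier_mat n n"
    and P: "P \<in> carrier_mat n n" and Q: "Q \<in> carrier_mat n n" and QP: "Q * P = 1\<^sub>m n"
    and gauge: "gauge_transform d (map_mat emb G) P (map_mat emb G')"
  shows "count (exps_mod_Z G') c \<le> count (exps_mod_Z G) c"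
proof (rule ccontr)
  interpret comm_ring_hom emb by (rule diff_K_algebra_comm_ring_hom[OF A])
  let ?k = "count (exps_mod_Z G) c" and ?k' = "count (exps_mod_Z G') c"
  assume "\<not> ?k' \<le> ?k"
  then have k: "?k < ?k'" by simp
  have k': "?k' \<le> n" by (rule count_exps_mod_Z_le_dim[OF G'])
  from exps_mod_Z_upper_triangular[OF alg_closed G] obtain U S T
    where sim: "similar_mat_wit G U S T" and U: "upper_triangular U"
      and diag: "\<forall>i<n. {y. U $$ (i, i) - y \<in> \<int>} = c \<longleftrightarrow> i < ?k" by blast
  from exps_mod_Z_upper_triangular[OF alg_closed G'] obtain U' S' T'
    where sim': "similar_mat_wit G' U' S' T'" and U': "upper_triangular U'"
      and diag': "\<forall>i<n. {y. U' $$ (i, i) - y \<in> \<int>} = c \<longleftrightarrow> i < ?k'" by blast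
  from similar_mat_witD2[OF G sim] similar_mat_witD2[OF G' sim']
  have car: "U \<in> carrier_mat n n" "S \<in> carrier_mat n n" "T \<in> carrier_mat n n"
    "U' \<in> carrier_mat n n" "S' \<in> carrier_mat n n" "T' \<in> carrier_mat n n"
    and ST: "S * T = 1\<^sub>m n" and TS': "T' * S' = 1\<^sub>m n" by auto
  define Pt where "Pt = map_mat emb T * P * map_mat emb S'"
  have Pt: "Pt \<in> carrier_mat n n" unfolding Pt_def using car P by simp
  have gauge': "gauge_transform d (map_mat emb U) Pt (map_mat emb U')"
    unfolding Pt_def by (rule gauge_transform_similar[OF A G G' sim sim' P gauge])
  have apart: "U $$ (i, i) - U' $$ (j, j) \<notin> \<int>" if "?k \<le> i" "i < n" "j < ?k'" for i j
  proof
    assume "U $$ (i, i) - U' $$ (j, j) \<in> \<int>"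
    from Ints_coset_eq[OF this] diag[rule_format, of i] diag'[rule_format, of j] that k'
    show False by simp
  qed
  have zero: "Pt $$ (i, j) = 0" if "?k \<le> i" "i < n" "j < ?k'" for i j
    using gauge_transform_upper_triangular_zero_block[OF comm_ring_hom_axioms car(1) U car(4) U' Pt gauge'
        no_exp_log_noninteger_solution[OF A reps noexp] apart k' that] .
  have "map_mat emb S * map_mat emb T = 1\<^sub>m n" "map_mat emb T' * map_mat emb S' = 1\<^sub>m n"
    using car ST TS' by (simp_all add: mat_hom_one flip: mat_hom_mult)
  then have "(map_mat emb T' * Q * map_mat emb S) * Pt = 1\<^sub>m n"
    unfolding Pt_def by (intro left_inverse_conj) (use car P Q QP in simp_all)
  then have "(1::'a) = 0"
    by (intro left_invertible_zero_block_trivial[OF Pt _ _ k k' zero]) (use car Q in simp_all)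
  with diff_K_algebra_nontrivial[OF A] show False by simp
qed

section \<open>Differential modules\<close>

lemma is_basis_coordinates:
  assumes "is_basis scale n b"
  obtains p where "\<And>j. v j = (\<Sum>i<n. scale (p i j) (b i))"
proof -
  from assms have "\<forall>j. \<exists>f. v j = (\<Sum>i<n. scale (f i) (b i))" unfolding is_basis_def by blast
  then obtain f where "\<forall>j. v j = (\<Sum>i<n. scale (f j i) (b i))" by metis
  then show thesis by (intro that[of "\<lambda>i j. f j i"]) simp
qed

lemma is_basis_coeff_eq:
  assumes b: "is_basis scale n b"
    and eq: "(\<Sum>i<n. scale (f i) (b i)) = (\<Sum>i<n. scale (g i) (b i))" and i: "i < n"
  shows "f i = g i"
proof -
  define f' where "f' i = (if i < n then f i else 0)" for i
  define g' where "g' i = (if i < n then g i else 0)" for i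
  have "\<exists>!h. (\<forall>i. n \<le> i \<longrightarrow> h i = 0) \<and> (\<Sum>i<n. scale (f i) (b i)) = (\<Sum>i<n. scale (h i) (b i))"
    using b unfolding is_basis_def by blast
  moreover have "(\<forall>i. n \<le> i \<longrightarrow> f' i = 0) \<and> (\<Sum>i<n. scale (f i) (b i)) = (\<Sum>i<n. scale (f' i) (b i))"
    by (simp add: f'_def)
  moreover have "(\<forall>i. n \<le> i \<longrightarrow> g' i = 0) \<and> (\<Sum>i<n. scale (f i) (b i)) = (\<Sum>i<n. scale (g' i) (b i))"
    using eq by (simp add: g'_def)
  ultimately have "f' = g'" by blast
  then show ?thesis using i unfolding f'_def g'_def by metis
qed

lemma (in Modules.module) sum_scale_sum:
  fixes n :: nat
  shows "(\<Sum>i<n. scale (c i) (\<Sum>l<n. scale (a l i) (b l))) = (\<Sum>l<n. scale (\<Sum>i<n. c i * a l i) (b l))"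
proof -
  have "(\<Sum>i<n. scale (c i) (\<Sum>l<n. scale (a l i) (b l))) = (\<Sum>i<n. \<Sum>l<n. scale (c i * a l i) (b l))"
    by (simp add: scale_sum_right)
  also have "\<dots> = (\<Sum>l<n. scale (\<Sum>i<n. c i * a l i) (b l))"
    by (subst sum.swap) (simp add: scale_sum_left)
  finally show ?thesis .
qed

lemma (in Modules.module) sum_scale_delta:
  fixes j n :: nat
  assumes "j < n"
  shows "(\<Sum>l<n. scale (if l = j then 1 else 0) (b l)) = b j"
proof -
  have "(\<Sum>l<n. scale (if l = j then 1 else 0) (b l)) = (\<Sum>l<n. if l = j then b l else 0)"
    by (rule sum.cong) auto
  also have "\<dots> = b j" using assms by (subst sum.delta) auto
  finally show ?thesis .
qed

lemma diff_module_change_of_basis: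
  fixes scale :: "'a::comm_ring_1 \<Rightarrow> 'm::ab_group_add \<Rightarrow> 'm"
  assumes M: "diff_module d scale nabla"
    and b: "is_basis scale n b" and b': "is_basis scale n b'"
    and g: "is_conn_matrix nabla scale n b g" and g': "is_conn_matrix nabla scale n b' g'"
  shows "\<exists>P Q. P \<in> carrier_mat n n \<and> Q \<in> carrier_mat n n \<and> Q * P = 1\<^sub>m n \<and>
    gauge_transform d (mat n n (\<lambda>(i, j). g i j)) P (mat n n (\<lambda>(i, j). g' i j))"
proof -
  interpret Modules.module scale using M unfolding diff_module_def by blast
  have nabla_add: "nabla (x + y) = nabla x + nabla y"
    and nabla_scale: "nabla (scale f x) = scale (d f) x + scale f (nabla x)" for x y f
    using M unfolding diff_module_def by auto
  interpret nabla: additive nabla by unfold_locales (rule nabla_add)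
  obtain p where pb: "\<And>j. b' j = (\<Sum>i<n. scale (p i j) (b i))" using is_basis_coordinates[OF b, of b'] by blast
  obtain q where qb: "\<And>j. b j = (\<Sum>i<n. scale (q i j) (b' i))" using is_basis_coordinates[OF b', of b] by blast
  have QP: "(\<Sum>i<n. q l i * p i j) = (if l = j then 1 else 0)" if "l < n" "j < n" for l j
  proof -
    have "(\<Sum>l<n. scale (if l = j then 1 else 0) (b' l)) = (\<Sum>i<n. scale (p i j) (b i))"
      using sum_scale_delta[OF \<open>j < n\<close>] pb by simp
    also have "\<dots> = (\<Sum>l<n. scale (\<Sum>i<n. p i j * q l i) (b' l))"
      unfolding qb by (rule sum_scale_sum)
    finally have "(if l = j then 1 else 0) = (\<Sum>i<n. p i j * q l i)"
      by (rule is_basis_coeff_eq[OF b' _ \<open>l < n\<close>])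
    then show ?thesis by (simp add: mult.commute)
  qed
  have gauge: "d (p l j) + (\<Sum>i<n. g l i * p i j) = (\<Sum>i<n. p l i * g' i j)"
    if "l < n" "j < n" for l j
  proof -
    have "(\<Sum>l<n. scale (d (p l j) + (\<Sum>i<n. p i j * g l i)) (b l))
        = (\<Sum>i<n. scale (d (p i j)) (b i)) + (\<Sum>i<n. scale (p i j) (\<Sum>l<n. scale (g l i) (b l)))"
      by (simp add: sum_scale_sum sum.distrib scale_left_distrib)
    also have "\<dots> = nabla (b' j)"
      using g unfolding pb nabla.sum nabla_scale is_conn_matrix_def by (simp add: sum.distrib)
    also have "\<dots> = (\<Sum>l<n. scale (\<Sum>i<n. g' i j * p l i) (b l))"
      using g' \<open>j < n\<close> unfolding is_conn_matrix_def pb[symmetric] by (simp add: pb sum_scale_sum)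
    finally have "d (p l j) + (\<Sum>i<n. p i j * g l i) = (\<Sum>i<n. g' i j * p l i)"
      by (rule is_basis_coeff_eq[OF b _ \<open>l < n\<close>])
    then show ?thesis by (simp add: mult.commute)
  qed
  show ?thesis
  proof (intro exI conjI)
    show "mat n n (\<lambda>(i, j). q i j) * mat n n (\<lambda>(i, j). p i j) = 1\<^sub>m n"
      using QP by (intro eq_matI) (auto simp: scalar_prod_def atLeast0LessThan)
    show "gauge_transform d (mat n n (\<lambda>(i, j). g i j)) (mat n n (\<lambda>(i, j). p i j))
        (mat n n (\<lambda>(i, j). g' i j))"
      using gauge unfolding gauge_transform_def
      by (intro eq_matI) (auto simp: scalar_prod_def atLeast0LessThan)
  qed auto
qed

theorem mainTheorem15:
  fixes emb :: "'k::field_char_0 \<Rightarrow> 'a::comm_ring_1"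
    and t ti :: 'a and d :: "'a \<Rightarrow> 'a" and R :: "'k set"
    and scale :: "'a \<Rightarrow> 'm::ab_group_add \<Rightarrow> 'm" and nabla :: "'m \<Rightarrow> 'm"
    and n :: nat and b b' :: "nat \<Rightarrow> 'm" and G G' :: "'k mat"
  assumes alg_closed: "\<forall>p :: 'k poly. degree p \<ge> 1 \<longrightarrow> (\<exists>x. poly p x = 0)"
    and reps: "reps R"
    and A: "diff_K_algebra emb t ti d"
    and noexp: "no_exp_log emb d R"
    and M: "diff_module d scale nabla"
    and rs: "regular_singular emb t ti d R scale nabla n"
    and b: "is_basis scale n b" and b': "is_basis scale n b'"
    and G: "G \<in> carrier_mat n n" and G': "G' \<in> carrier_mat n n"
    and Gb: "is_conn_matrix nabla scale n b (\<lambda>i j. emb (G $$ (i, j)))"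
    and Gb': "is_conn_matrix nabla scale n b' (\<lambda>i j. emb (G' $$ (i, j)))"
  shows "exps_mod_Z G = exps_mod_Z G'"
proof (rule multiset_eqI)
  fix c
  have emb_mat: "mat n n (\<lambda>(i, j). emb (H $$ (i, j))) = map_mat emb H" if "H \<in> carrier_mat n n" for H
    using that by auto
  from diff_module_change_of_basis[OF M b b' Gb Gb'] obtain P Q
    where "P \<in> carrier_mat n n" "Q \<in> carrier_mat n n" "Q * P = 1\<^sub>m n"
      and "gauge_transform d (map_mat emb G) P (map_mat emb G')"
    unfolding emb_mat[OF G] emb_mat[OF G'] by blast
  then have "count (exps_mod_Z G') c \<le> count (exps_mod_Z G) c"
    by (intro count_exps_mod_Z_le[OF alg_closed reps A noexp G G'])
  moreover from diff_module_change_of_basis[OF M b' b Gb' Gb] obtain P' Q'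
    where "P' \<in> carrier_mat n n" "Q' \<in> carrier_mat n n" "Q' * P' = 1\<^sub>m n"
      and "gauge_transform d (map_mat emb G') P' (map_mat emb G)"
    unfolding emb_mat[OF G] emb_mat[OF G'] by blast
  then have "count (exps_mod_Z G) c \<le> count (exps_mod_Z G') c"
    by (intro count_exps_mod_Z_le[OF alg_closed reps A noexp G' G])
  ultimately show "count (exps_mod_Z G) c = count (exps_mod_Z G') c" by simp
qed

end
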